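(* Let $\alpha\ge1$ and $b\in(0,1]$. Let $\nu,\mu$ be the Gibbs distributions of two Ising models $(G,J^\nu,h^\nu)$ and $(G,J^\mu,h^\mu)$ that are both $b$-marginally bounded. Then $$D_{\chi^\alpha}(\nu\|\mu)\ \ge\ \frac{b^{2\alpha}}{2}\, d_{\mathrm{par}}(\nu,\mu)^\alpha .$$
   Context: An Ising model $(G,J,h)$ on $G=(V,E)$ consists of a symmetric $J\in\mathbb{R}^{V\times V}$ with $J_{uv}\ne0$ only if $\{u,v\}\in E$, and $h\in\mathbb{R}^V$; its Gibbs distribution on $\{-1,+1\}^V$ is $\mu(\sigma)\propto\exp(\tfrac12\sigma^TJ\sigma+h^T\sigma)$. The $\chi^\alpha$-divergence is $D_{\chi^\alpha}(\nu\|\mu)=\sum_\sigma\mu(\sigma)\cdot\frac12\left|\frac{\nu(\sigma)}{\mu(\sigma)}-1\right|^\alpha$. The parameter distance is $d_{\mathrm{par}}(\nu,\mu)=\max\left\{\max_{u,v}|J^\nu_{uv}-J^\mu_{uv}|,\ \max_{v\in V}\frac{|h^\nu(v)-h^\mu(v)|}{\deg(v)+1}\right\}$, with $\deg(v)$ the degree of $v$ in $G$. $\mu$ is $b$-marginally bounded if for every $\Lambda\subseteq V$, pinning $\sigma\in\{-1,+1\}^\Lambda$, $v\notin\Lambda$, $c\in\{-1,+1\}$, the conditional marginal probability that $v$ takes value $c$ given $\sigma$ on $\Lambda$ is at least $b$. *)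

theory Defs
  imports Complex_Main
begin

text \<open>Vertices: a finite type 'v (V = UNIV). A simple graph is a symmetric,
irreflexive adjacency relation E. Spin configurations are 'v \<Rightarrow> bool,
with True meaning +1 and False meaning -1.\<close>

definition simple_graph :: "('v \<Rightarrow> 'v \<Rightarrow> bool) \<Rightarrow> bool" where
  "simple_graph E \<longleftrightarrow> (\<forall>u v. E u v \<longleftrightarrow> E v u) \<and> (\<forall>v. \<not> E v v)"

definition deg :: "('v \<Rightarrow> 'v \<Rightarrow> bool) \<Rightarrow> 'v \<Rightarrow> nat" where
  "deg E v = card {u. E u v}"

definition ising_model :: "('v \<Rightarrow> 'v \<Rightarrow> bool) \<Rightarrow> ('v \<Rightarrow> 'v \<Rightarrow> real) \<Rightarrow> ('v \<Rightarrow> real) \<Rightarrow> bool" where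
  "ising_model E J h \<longleftrightarrow> (\<forall>u v. J u v = J v u) \<and> (\<forall>u v. J u v \<noteq> 0 \<longrightarrow> E u v)"

definition spin :: "('v \<Rightarrow> bool) \<Rightarrow> 'v \<Rightarrow> real" where
  "spin \<sigma> v = (if \<sigma> v then 1 else -1)"

definition ising_weight :: "('v::finite \<Rightarrow> 'v \<Rightarrow> real) \<Rightarrow> ('v \<Rightarrow> real) \<Rightarrow> ('v \<Rightarrow> bool) \<Rightarrow> real" where
  "ising_weight J h \<sigma> =
     exp ((1/2) * (\<Sum>u\<in>UNIV. \<Sum>v\<in>UNIV. spin \<sigma> u * J u v * spin \<sigma> v) + (\<Sum>v\<in>UNIV. h v * spin \<sigma> v))"

definition gibbs :: "('v::finite \<Rightarrow> 'v \<Rightarrow> real) \<Rightarrow> ('v \<Rightarrow> real) \<Rightarrow> ('v \<Rightarrow> bool) \<Rightarrow> real" where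
  "gibbs J h \<sigma> = ising_weight J h \<sigma> / (\<Sum>\<tau>\<in>UNIV. ising_weight J h \<tau>)"

definition cond_marginal :: "(('v::finite \<Rightarrow> bool) \<Rightarrow> real) \<Rightarrow> 'v set \<Rightarrow> ('v \<Rightarrow> bool) \<Rightarrow> 'v \<Rightarrow> bool \<Rightarrow> real" where
  "cond_marginal \<mu> \<Lambda> \<tau> v c =
     (\<Sum>\<sigma>\<in>{\<sigma>. (\<forall>u\<in>\<Lambda>. \<sigma> u = \<tau> u) \<and> \<sigma> v = c}. \<mu> \<sigma>) /
     (\<Sum>\<sigma>\<in>{\<sigma>. \<forall>u\<in>\<Lambda>. \<sigma> u = \<tau> u}. \<mu> \<sigma>)"

definition marginally_bounded :: "real \<Rightarrow> (('v::finite \<Rightarrow> bool) \<Rightarrow> real) \<Rightarrow> bool" where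
  "marginally_bounded b \<mu> \<longleftrightarrow>
     (\<forall>\<Lambda> \<tau> v c. v \<notin> \<Lambda> \<longrightarrow> cond_marginal \<mu> \<Lambda> \<tau> v c \<ge> b)"

definition chi_alpha_div :: "real \<Rightarrow> (('v::finite \<Rightarrow> bool) \<Rightarrow> real) \<Rightarrow> (('v \<Rightarrow> bool) \<Rightarrow> real) \<Rightarrow> real" where
  "chi_alpha_div \<alpha> \<nu> \<mu> = (\<Sum>\<sigma>\<in>UNIV. \<mu> \<sigma> * ((1/2) * \<bar>\<nu> \<sigma> / \<mu> \<sigma> - 1\<bar> powr \<alpha>))"

definition d_par :: "('v::finite \<Rightarrow> 'v \<Rightarrow> bool) \<Rightarrow> ('v \<Rightarrow> 'v \<Rightarrow> real) \<Rightarrow> ('v \<Rightarrow> real)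
                      \<Rightarrow> ('v \<Rightarrow> 'v \<Rightarrow> real) \<Rightarrow> ('v \<Rightarrow> real) \<Rightarrow> real" where
  "d_par E J1 h1 J2 h2 =
     max (Max ((\<lambda>(u, v). \<bar>J1 u v - J2 u v\<bar>) ` UNIV))
         (Max ((\<lambda>v. \<bar>h1 v - h2 v\<bar> / (real (deg E v) + 1)) ` UNIV))"

end

theory Submission
  imports Defs "HOL-Analysis.Analysis"
begin

text \<open>Let T be the L1 distance between \<nu> and \<mu>. Jensen's inequality for x \<mapsto> x^\<alpha> gives
chi_alpha_div \<alpha> \<nu> \<mu> \<ge> T^\<alpha> / 2, so it suffices to show b^2 d_par \<le> T.

Under either model, the conditional probability p_v(\<sigma>) of the spin of \<sigma> at v given the other
spins has logit 2 \<sigma>_v x_v(\<sigma>), where x_v(\<sigma>) = \<Sum>_u J_vu \<sigma>_u + h_v is the local field. Marginal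
boundedness keeps p_v in [b, 1 - b], where the logit is 2/b-Lipschitz, and pairing every \<sigma> with
its flip at v gives b E_\<mu>|x_v^\<nu> - x_v^\<mu>| \<le> T. Conversely, flipping the spin at w changes
x_v^\<nu> - x_v^\<mu> by \<plusminus>2 (J_vw^\<nu> - J_vw^\<mu>), and \<mu> gives every \<sigma> at least a b-fraction of the mass
of its flip pair, so E_\<mu>|x_v^\<nu> - x_v^\<mu>| \<ge> 2b |J_vw^\<nu> - J_vw^\<mu>|. Finally |h_v^\<nu> - h_v^\<mu>| is at most
the local-field difference plus the deg(v) coupling differences at v.\<close>

definition flip :: "'v \<Rightarrow> ('v \<Rightarrow> bool) \<Rightarrow> 'v \<Rightarrow> bool" where
  "flip v \<sigma> = \<sigma>(v := \<not> \<sigma> v)"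

lemma flip_flip [simp]: "flip v (flip v \<sigma>) = \<sigma>"
  by (auto simp: flip_def)

lemma flip_neq [simp]: "flip v \<sigma> \<noteq> \<sigma>"
  by (auto simp: flip_def fun_eq_iff)

lemma spin_flip: "spin (flip w \<sigma>) u = (if u = w then - spin \<sigma> u else spin \<sigma> u)"
  by (simp add: flip_def spin_def)

lemma abs_spin [simp]: "\<bar>spin \<sigma> v\<bar> = 1"
  by (simp add: spin_def)

lemma sum_flip:
  fixes f :: "('v::finite \<Rightarrow> bool) \<Rightarrow> 'a::comm_monoid_add"
  shows "(\<Sum>\<sigma>\<in>UNIV. f (flip v \<sigma>)) = (\<Sum>\<sigma>\<in>UNIV. f \<sigma>)"
  by (rule sum.reindex_bij_witness[of _ "flip v" "flip v"]) auto

lemma sum_add_flip: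
  fixes f :: "('v::finite \<Rightarrow> bool) \<Rightarrow> real"
  shows "(\<Sum>\<sigma>\<in>UNIV. f \<sigma> + f (flip v \<sigma>)) = 2 * (\<Sum>\<sigma>\<in>UNIV. f \<sigma>)"
  by (simp add: sum.distrib sum_flip)

text \<open>\<open>site_cond \<mu> v \<sigma>\<close> is the conditional probability under \<open>\<mu>\<close> of the value of \<open>\<sigma>\<close> at v,
given \<open>\<sigma>\<close> off v: the only configurations agreeing with \<open>\<sigma>\<close> off v are \<open>\<sigma>\<close> and \<open>flip v \<sigma>\<close>.\<close>

definition site_cond :: "(('v \<Rightarrow> bool) \<Rightarrow> real) \<Rightarrow> 'v \<Rightarrow> ('v \<Rightarrow> bool) \<Rightarrow> real" where
  "site_cond \<mu> v \<sigma> = \<mu> \<sigma> / (\<mu> \<sigma> + \<mu> (flip v \<sigma>))"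

lemma site_cond_flip:
  assumes "\<mu> \<sigma> + \<mu> (flip v \<sigma>) \<noteq> 0"
  shows "site_cond \<mu> v (flip v \<sigma>) = 1 - site_cond \<mu> v \<sigma>"
  using assms by (simp add: site_cond_def field_simps)

lemma cond_marginal_Compl_singleton:
  "cond_marginal \<mu> (- {v}) \<sigma> v (\<sigma> v) = site_cond \<mu> v \<sigma>"
proof -
  have "{\<sigma>'. (\<forall>u\<in>- {v}. \<sigma>' u = \<sigma> u) \<and> \<sigma>' v = \<sigma> v} = {\<sigma>}"
    by (auto simp: fun_eq_iff)
  moreover have "{\<sigma>'. \<forall>u\<in>- {v}. \<sigma>' u = \<sigma> u} = {\<sigma>, flip v \<sigma>}"
    by (auto simp: fun_eq_iff flip_def)
  ultimately show ?thesis
    by (simp add: cond_marginal_def site_cond_def flip_neq[symmetric])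
qed

lemma marginally_bounded_site_cond:
  "marginally_bounded b \<mu> \<Longrightarrow> b \<le> site_cond \<mu> v \<sigma>"
  unfolding marginally_bounded_def by (metis ComplD cond_marginal_Compl_singleton singletonI)

lemma marginally_bounded_site_cond_le:
  assumes "marginally_bounded b \<mu>" and "\<And>\<sigma>. 0 < \<mu> \<sigma>"
  shows "site_cond \<mu> v \<sigma> \<le> 1 - b"
  using marginally_bounded_site_cond[OF assms(1), of v "flip v \<sigma>"] site_cond_flip[of \<mu> \<sigma> v]
    assms(2)[of \<sigma>] assms(2)[of "flip v \<sigma>"] by simp

definition logit :: "real \<Rightarrow> real" where
  "logit p = ln (p / (1 - p))"

lemma abs_ln_diff_le:
  fixes c x y :: real
  assumes "0 < c" "c \<le> x" "c \<le> y"
  shows "\<bar>ln x - ln y\<bar> \<le> \<bar>x - y\<bar> / c"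
proof -
  have ln_diff_le: "ln x' - ln y' \<le> \<bar>x' - y'\<bar> / c" if "c \<le> x'" "c \<le> y'" for x' y'
  proof (cases "y' \<le> x'")
    case True
    have "ln x' - ln y' = ln (x' / y')"
      using that \<open>0 < c\<close> by (simp add: ln_div)
    also have "\<dots> \<le> x' / y' - 1"
      using that \<open>0 < c\<close> by (intro ln_le_minus_one) simp
    also have "\<dots> = (x' - y') / y'"
      using that \<open>0 < c\<close> by (simp add: field_simps)
    also have "\<dots> \<le> \<bar>x' - y'\<bar> / c"
      using that \<open>0 < c\<close> True by (intro divide_mono) auto
    finally show ?thesis .
  next
    case False
    then have "ln x' - ln y' \<le> 0"
      using that \<open>0 < c\<close> by simp
    also have "0 \<le> \<bar>x' - y'\<bar> / c"
      using \<open>0 < c\<close> by simp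
    finally show ?thesis .
  qed
  show ?thesis
    using ln_diff_le[of x y] ln_diff_le[of y x] assms by (simp add: abs_minus_commute abs_le_iff)
qed

lemma abs_logit_diff_le:
  fixes b p q :: real
  assumes "0 < b" "b \<le> p" "b \<le> 1 - p" "b \<le> q" "b \<le> 1 - q"
  shows "\<bar>logit p - logit q\<bar> \<le> 2 * \<bar>p - q\<bar> / b"
proof -
  have "logit p - logit q = (ln p - ln q) - (ln (1 - p) - ln (1 - q))"
    using assms by (simp add: logit_def ln_div)
  moreover have "\<bar>ln p - ln q\<bar> \<le> \<bar>p - q\<bar> / b"
    using assms by (intro abs_ln_diff_le) auto
  moreover have "\<bar>ln (1 - p) - ln (1 - q)\<bar> \<le> \<bar>p - q\<bar> / b"
    using assms abs_ln_diff_le[of b "1 - p" "1 - q"] by (simp add: abs_minus_commute)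
  ultimately show ?thesis
    by (simp add: field_simps)
qed

lemma logit_site_cond:
  assumes "0 < \<mu> \<sigma>" "0 < \<mu> (flip v \<sigma>)"
  shows "logit (site_cond \<mu> v \<sigma>) = ln (\<mu> \<sigma>) - ln (\<mu> (flip v \<sigma>))"
proof -
  have "1 - site_cond \<mu> v \<sigma> = \<mu> (flip v \<sigma>) / (\<mu> \<sigma> + \<mu> (flip v \<sigma>))"
    using assms by (simp add: site_cond_def field_simps)
  then show ?thesis
    using assms by (simp add: logit_def site_cond_def ln_div)
qed

lemma abs_proportion_diff_le:
  fixes a a' c c' :: real
  assumes "0 < a" "0 < a'" "0 < c" "0 < c'"
  shows "(c + c') * \<bar>a / (a + a') - c / (c + c')\<bar> \<le> \<bar>a - c\<bar> + \<bar>a' - c'\<bar>"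
proof -
  have "a + a' \<noteq> 0" "c + c' \<noteq> 0"
    using assms by simp_all
  then have "(c + c') * (a / (a + a') - c / (c + c')) = (a * (c' - a') + a' * (a - c)) / (a + a')"
    by (simp add: divide_simps) (simp add: algebra_simps)
  then have "(c + c') * \<bar>a / (a + a') - c / (c + c')\<bar> = \<bar>(a * (c' - a') + a' * (a - c)) / (a + a')\<bar>"
    using assms by (metis abs_mult abs_of_pos add_pos_pos)
  also have "\<dots> = \<bar>a * (c' - a') + a' * (a - c)\<bar> / (a + a')"
    using assms by simp
  also have "\<dots> \<le> (a * \<bar>a' - c'\<bar> + a' * \<bar>a - c\<bar>) / (a + a')"
    using abs_triangle_ineq[of "a * (c' - a')" "a' * (a - c)"] assms
    by (intro divide_right_mono) (simp_all add: abs_mult abs_minus_commute)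
  also have "\<dots> \<le> ((a + a') * (\<bar>a - c\<bar> + \<bar>a' - c'\<bar>)) / (a + a')"
    using assms by (intro divide_right_mono) (simp_all add: algebra_simps)
  also have "\<dots> = \<bar>a - c\<bar> + \<bar>a' - c'\<bar>"
    using assms by simp
  finally show ?thesis .
qed

lemma sum_site_cond_diff_le:
  fixes \<nu> \<mu> :: "('v::finite \<Rightarrow> bool) \<Rightarrow> real"
  assumes \<nu>_pos: "\<And>\<sigma>. 0 < \<nu> \<sigma>" and \<mu>_pos: "\<And>\<sigma>. 0 < \<mu> \<sigma>"
  shows "(\<Sum>\<sigma>\<in>UNIV. \<mu> \<sigma> * \<bar>site_cond \<nu> v \<sigma> - site_cond \<mu> v \<sigma>\<bar>) \<le> (\<Sum>\<sigma>\<in>UNIV. \<bar>\<nu> \<sigma> - \<mu> \<sigma>\<bar>)"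
proof -
  define D where "D \<sigma> = \<bar>site_cond \<nu> v \<sigma> - site_cond \<mu> v \<sigma>\<bar>" for \<sigma>
  have D_flip: "D (flip v \<sigma>) = D \<sigma>" for \<sigma>
    using \<nu>_pos[of \<sigma>] \<nu>_pos[of "flip v \<sigma>"] \<mu>_pos[of \<sigma>] \<mu>_pos[of "flip v \<sigma>"]
    by (simp add: D_def site_cond_flip abs_minus_commute)
  have pair: "\<mu> \<sigma> * D \<sigma> + \<mu> (flip v \<sigma>) * D (flip v \<sigma>)
      \<le> \<bar>\<nu> \<sigma> - \<mu> \<sigma>\<bar> + \<bar>\<nu> (flip v \<sigma>) - \<mu> (flip v \<sigma>)\<bar>" for \<sigma>
  proof -
    have "\<mu> \<sigma> * D \<sigma> + \<mu> (flip v \<sigma>) * D (flip v \<sigma>) = (\<mu> \<sigma> + \<mu> (flip v \<sigma>)) * D \<sigma>"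
      by (simp add: D_flip distrib_right)
    also have "\<dots> \<le> \<bar>\<nu> \<sigma> - \<mu> \<sigma>\<bar> + \<bar>\<nu> (flip v \<sigma>) - \<mu> (flip v \<sigma>)\<bar>"
      using abs_proportion_diff_le[OF \<nu>_pos \<nu>_pos \<mu>_pos \<mu>_pos, of \<sigma> "flip v \<sigma>" \<sigma> "flip v \<sigma>"]
      by (simp add: D_def site_cond_def)
    finally show ?thesis .
  qed
  then have "(\<Sum>\<sigma>\<in>UNIV. \<mu> \<sigma> * D \<sigma> + \<mu> (flip v \<sigma>) * D (flip v \<sigma>))
      \<le> (\<Sum>\<sigma>\<in>UNIV. \<bar>\<nu> \<sigma> - \<mu> \<sigma>\<bar> + \<bar>\<nu> (flip v \<sigma>) - \<mu> (flip v \<sigma>)\<bar>)"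
    by (intro sum_mono pair)
  then show ?thesis
    unfolding sum_add_flip[of "\<lambda>\<sigma>. \<mu> \<sigma> * D \<sigma>"] sum_add_flip[of "\<lambda>\<sigma>. \<bar>\<nu> \<sigma> - \<mu> \<sigma>\<bar>"]
    by (simp add: D_def)
qed

lemma expectation_abs_ge_flip_jump:
  fixes \<mu> X :: "('v::finite \<Rightarrow> bool) \<Rightarrow> real"
  assumes \<mu>_pos: "\<And>\<sigma>. 0 < \<mu> \<sigma>" and \<mu>_sum: "(\<Sum>\<sigma>\<in>UNIV. \<mu> \<sigma>) = 1"
    and "0 \<le> b" and bounded: "\<And>\<sigma>. b \<le> site_cond \<mu> w \<sigma>"
    and jump: "\<And>\<sigma>. c \<le> \<bar>X \<sigma> - X (flip w \<sigma>)\<bar>"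
  shows "b * c \<le> (\<Sum>\<sigma>\<in>UNIV. \<mu> \<sigma> * \<bar>X \<sigma>\<bar>)"
proof -
  have pair: "b * c * (\<mu> \<sigma> + \<mu> (flip w \<sigma>)) \<le> \<mu> \<sigma> * \<bar>X \<sigma>\<bar> + \<mu> (flip w \<sigma>) * \<bar>X (flip w \<sigma>)\<bar>" for \<sigma>
  proof -
    define m where "m = \<mu> \<sigma> + \<mu> (flip w \<sigma>)"
    have m_pos: "0 < m"
      using \<mu>_pos[of \<sigma>] \<mu>_pos[of "flip w \<sigma>"] by (simp add: m_def)
    have bm: "b * m \<le> \<mu> \<sigma>" "b * m \<le> \<mu> (flip w \<sigma>)"
      using bounded[of \<sigma>] bounded[of "flip w \<sigma>"] m_pos
      by (simp_all add: site_cond_def m_def le_divide_eq add.commute)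
    have "c \<le> \<bar>X \<sigma>\<bar> + \<bar>X (flip w \<sigma>)\<bar>"
      using jump[of \<sigma>] by linarith
    then have "b * m * c \<le> b * m * (\<bar>X \<sigma>\<bar> + \<bar>X (flip w \<sigma>)\<bar>)"
      using \<open>0 \<le> b\<close> m_pos by (intro mult_left_mono) auto
    also have "\<dots> \<le> \<mu> \<sigma> * \<bar>X \<sigma>\<bar> + \<mu> (flip w \<sigma>) * \<bar>X (flip w \<sigma>)\<bar>"
      using bm by (simp add: distrib_left add_mono mult_right_mono)
    finally show ?thesis
      by (simp add: m_def ac_simps)
  qed
  have "2 * (b * c) = (\<Sum>\<sigma>\<in>UNIV. b * c * (\<mu> \<sigma> + \<mu> (flip w \<sigma>)))"
    by (simp add: sum_distrib_left[symmetric] sum_add_flip \<mu>_sum)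
  also have "\<dots> \<le> (\<Sum>\<sigma>\<in>UNIV. \<mu> \<sigma> * \<bar>X \<sigma>\<bar> + \<mu> (flip w \<sigma>) * \<bar>X (flip w \<sigma>)\<bar>)"
    by (intro sum_mono pair)
  also have "\<dots> = 2 * (\<Sum>\<sigma>\<in>UNIV. \<mu> \<sigma> * \<bar>X \<sigma>\<bar>)"
    by (rule sum_add_flip)
  finally show ?thesis by simp
qed

lemma powr_convex_nonneg:
  fixes p :: real
  assumes "1 \<le> p"
  shows "convex_on {0..} (\<lambda>x. x powr p)"
proof (rule convex_onI)
  fix t x y :: real
  assume t: "0 < t" "t < 1" and xy: "x \<in> {0..}" "y \<in> {0..}"
  have scale: "(s * z) powr p \<le> s * z powr p" if "0 < s" "s \<le> 1" "0 \<le> z" for s z :: real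
  proof -
    have "(s * z) powr p = s powr p * z powr p"
      using that by (simp add: powr_mult)
    also have "\<dots> \<le> s * z powr p"
      using that assms by (intro mult_right_mono powr_le_one_le) auto
    finally show ?thesis .
  qed
  show "((1 - t) *\<^sub>R x + t *\<^sub>R y) powr p \<le> (1 - t) * x powr p + t * y powr p"
  proof (cases "x = 0 \<or> y = 0")
    case True
    then show ?thesis
      using scale[of t y] scale[of "1 - t" x] t xy by auto
  next
    case False
    then show ?thesis
      using convex_onD[OF powr_convex[OF assms], of t x y] t xy by simp
  qed
qed (simp add: convex_real_interval)

lemma chi_alpha_div_ge_l1:
  fixes \<nu> \<mu> :: "('v::finite \<Rightarrow> bool) \<Rightarrow> real"
  assumes "1 \<le> \<alpha>" and \<mu>_pos: "\<And>\<sigma>. 0 < \<mu> \<sigma>" and \<mu>_sum: "(\<Sum>\<sigma>\<in>UNIV. \<mu> \<sigma>) = 1"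
  shows "(\<Sum>\<sigma>\<in>UNIV. \<bar>\<nu> \<sigma> - \<mu> \<sigma>\<bar>) powr \<alpha> / 2 \<le> chi_alpha_div \<alpha> \<nu> \<mu>"
proof -
  have "\<mu> \<sigma> * \<bar>\<nu> \<sigma> / \<mu> \<sigma> - 1\<bar> = \<bar>\<nu> \<sigma> - \<mu> \<sigma>\<bar>" for \<sigma>
  proof -
    have "\<mu> \<sigma> * \<bar>\<nu> \<sigma> / \<mu> \<sigma> - 1\<bar> = \<bar>\<mu> \<sigma> * (\<nu> \<sigma> / \<mu> \<sigma> - 1)\<bar>"
      using \<mu>_pos[of \<sigma>] by (simp add: abs_mult)
    then show ?thesis
      using \<mu>_pos[of \<sigma>] by (simp add: right_diff_distrib)
  qed
  then have "(\<Sum>\<sigma>\<in>UNIV. \<bar>\<nu> \<sigma> - \<mu> \<sigma>\<bar>) powr \<alpha> = (\<Sum>\<sigma>\<in>UNIV. \<mu> \<sigma> *\<^sub>R \<bar>\<nu> \<sigma> / \<mu> \<sigma> - 1\<bar>) powr \<alpha>"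
    by simp
  also have "\<dots> \<le> (\<Sum>\<sigma>\<in>UNIV. \<mu> \<sigma> * \<bar>\<nu> \<sigma> / \<mu> \<sigma> - 1\<bar> powr \<alpha>)"
    using powr_convex_nonneg[OF \<open>1 \<le> \<alpha>\<close>] \<mu>_sum \<mu>_pos
    by (intro convex_on_sum[where C = "{0..}"]) (auto intro: less_imp_le)
  also have "\<dots> = 2 * chi_alpha_div \<alpha> \<nu> \<mu>"
    by (simp add: chi_alpha_div_def sum_distrib_left)
  finally show ?thesis
    by simp
qed

definition ising_exponent :: "('v::finite \<Rightarrow> 'v \<Rightarrow> real) \<Rightarrow> ('v \<Rightarrow> real) \<Rightarrow> ('v \<Rightarrow> bool) \<Rightarrow> real" where
  "ising_exponent J h \<sigma> =
     (1/2) * (\<Sum>u\<in>UNIV. \<Sum>v\<in>UNIV. spin \<sigma> u * J u v * spin \<sigma> v) + (\<Sum>v\<in>UNIV. h v * spin \<sigma> v)"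

definition local_field :: "('v::finite \<Rightarrow> 'v \<Rightarrow> real) \<Rightarrow> ('v \<Rightarrow> real) \<Rightarrow> 'v \<Rightarrow> ('v \<Rightarrow> bool) \<Rightarrow> real" where
  "local_field J h v \<sigma> = (\<Sum>u\<in>UNIV. J v u * spin \<sigma> u) + h v"

lemma quadratic_form_diff_single_site:
  fixes s s' :: "'v::finite \<Rightarrow> real"
  assumes sym: "\<And>u w. J u w = J w u" and diag: "J v v = 0"
    and agree: "\<And>u. u \<noteq> v \<Longrightarrow> s u = s' u"
  shows "(\<Sum>u\<in>UNIV. \<Sum>w\<in>UNIV. s u * J u w * s w) - (\<Sum>u\<in>UNIV. \<Sum>w\<in>UNIV. s' u * J u w * s' w)
    = 2 * (s v - s' v) * (\<Sum>w\<in>UNIV. J v w * s w)"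
proof -
  have delta: "s u - s' u = (if u = v then s v - s' v else 0)" for u
    using agree by auto
  have "(\<Sum>u\<in>UNIV. \<Sum>w\<in>UNIV. s u * J u w * s w) - (\<Sum>u\<in>UNIV. \<Sum>w\<in>UNIV. s' u * J u w * s' w)
    = (\<Sum>u\<in>UNIV. \<Sum>w\<in>UNIV. (s u - s' u) * J u w * s w)
      + (\<Sum>u\<in>UNIV. \<Sum>w\<in>UNIV. s' u * J u w * (s w - s' w))"
    by (simp add: sum_subtractf[symmetric] sum.distrib[symmetric] algebra_simps)
  also have "\<dots> = (\<Sum>u\<in>UNIV. (s u - s' u) * (\<Sum>w\<in>UNIV. J u w * s w))
      + (\<Sum>w\<in>UNIV. (s w - s' w) * (\<Sum>u\<in>UNIV. s' u * J u w))"
    by (subst (2) sum.swap) (simp add: sum_distrib_left algebra_simps)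
  also have "\<dots> = (s v - s' v) * (\<Sum>w\<in>UNIV. J v w * s w) + (s v - s' v) * (\<Sum>u\<in>UNIV. s' u * J u v)"
    by (subst (1 2) delta) (simp add: if_distrib[of "\<lambda>x. x * _"] cong: if_cong)
  also have "(\<Sum>u\<in>UNIV. s' u * J u v) = (\<Sum>w\<in>UNIV. J v w * s w)"
  proof (rule sum.cong)
    show "s' u * J u v = J v u * s u" for u
      using agree[of u] diag sym[of u v] by (cases "u = v") simp_all
  qed simp
  finally show ?thesis by simp
qed

lemma ising_exponent_flip:
  assumes sym: "\<And>u w. J u w = J w u" and diag: "J v v = 0"
  shows "ising_exponent J h \<sigma> - ising_exponent J h (flip v \<sigma>) = 2 * spin \<sigma> v * local_field J h v \<sigma>"
proof -
  have jump: "spin \<sigma> v - spin (flip v \<sigma>) v = 2 * spin \<sigma> v"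
    by (simp add: spin_flip)
  have "h u * spin \<sigma> u - h u * spin (flip v \<sigma>) u = (if u = v then 2 * spin \<sigma> v * h v else 0)" for u
    by (simp add: spin_flip)
  then have "(\<Sum>u\<in>UNIV. h u * spin \<sigma> u) - (\<Sum>u\<in>UNIV. h u * spin (flip v \<sigma>) u) = 2 * spin \<sigma> v * h v"
    by (simp add: sum_subtractf[symmetric])
  then show ?thesis
    unfolding ising_exponent_def local_field_def
    using quadratic_form_diff_single_site[where J=J and v=v and s="spin \<sigma>" and s'="spin (flip v \<sigma>)", OF sym diag]
    by (simp add: spin_flip jump algebra_simps)
qed

lemma ising_weight_eq_exp: "ising_weight J h \<sigma> = exp (ising_exponent J h \<sigma>)"
  by (simp add: ising_weight_def ising_exponent_def)

lemma partition_function_pos: "0 < (\<Sum>\<tau>\<in>UNIV. ising_weight J h \<tau>)"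
  unfolding ising_weight_eq_exp by (intro sum_pos) auto

lemma gibbs_pos: "0 < gibbs J h \<sigma>"
  unfolding gibbs_def by (intro divide_pos_pos partition_function_pos) (simp add: ising_weight_eq_exp)

lemma sum_gibbs: "(\<Sum>\<sigma>\<in>UNIV. gibbs J h \<sigma>) = 1"
  using partition_function_pos[of J h] by (simp add: gibbs_def sum_divide_distrib[symmetric])

lemma ln_gibbs_flip:
  assumes sym: "\<And>u w. J u w = J w u" and diag: "J v v = 0"
  shows "ln (gibbs J h \<sigma>) - ln (gibbs J h (flip v \<sigma>)) = 2 * spin \<sigma> v * local_field J h v \<sigma>"
proof -
  have "ln (gibbs J h \<sigma>') = ising_exponent J h \<sigma>' - ln (\<Sum>\<tau>\<in>UNIV. ising_weight J h \<tau>)" for \<sigma>'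
    using partition_function_pos[of J h] by (simp add: gibbs_def ln_div ising_weight_eq_exp)
  then show ?thesis
    using ising_exponent_flip[where J=J and v=v, OF sym diag] by simp
qed

lemma logit_site_cond_gibbs:
  assumes "\<And>u w. J u w = J w u" and "J v v = 0"
  shows "logit (site_cond (gibbs J h) v \<sigma>) = 2 * spin \<sigma> v * local_field J h v \<sigma>"
  using assms by (simp add: logit_site_cond gibbs_pos ln_gibbs_flip)

lemma local_field_flip:
  "local_field J h v (flip w \<sigma>) = local_field J h v \<sigma> - 2 * J v w * spin \<sigma> w"
proof -
  have "J v u * spin (flip w \<sigma>) u = J v u * spin \<sigma> u - (if u = w then 2 * J v w * spin \<sigma> w else 0)" for u
    by (simp add: spin_flip)
  then show ?thesis
    by (simp add: local_field_def sum_subtractf)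
qed

lemma abs_external_field_diff_le:
  "\<bar>h1 v - h2 v\<bar> \<le> \<bar>local_field J1 h1 v \<sigma> - local_field J2 h2 v \<sigma>\<bar> + (\<Sum>u\<in>UNIV. \<bar>J1 v u - J2 v u\<bar>)"
proof -
  have "local_field J1 h1 v \<sigma> - local_field J2 h2 v \<sigma> = (\<Sum>u\<in>UNIV. (J1 v u - J2 v u) * spin \<sigma> u) + (h1 v - h2 v)"
    by (simp add: local_field_def sum_subtractf[symmetric] algebra_simps)
  moreover have "\<bar>\<Sum>u\<in>UNIV. (J1 v u - J2 v u) * spin \<sigma> u\<bar> \<le> (\<Sum>u\<in>UNIV. \<bar>J1 v u - J2 v u\<bar>)"
    using sum_abs[of "\<lambda>u. (J1 v u - J2 v u) * spin \<sigma> u" UNIV] by (simp add: abs_mult)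
  ultimately show ?thesis
    by linarith
qed

lemma abs_external_field_diff_le_expectation:
  "\<bar>h1 v - h2 v\<bar> \<le> (\<Sum>\<sigma>\<in>UNIV. gibbs J h \<sigma> * \<bar>local_field J1 h1 v \<sigma> - local_field J2 h2 v \<sigma>\<bar>)
     + (\<Sum>u\<in>UNIV. \<bar>J1 v u - J2 v u\<bar>)"
proof -
  have "\<bar>h1 v - h2 v\<bar> = (\<Sum>\<sigma>\<in>UNIV. gibbs J h \<sigma> * \<bar>h1 v - h2 v\<bar>)"
    by (simp add: sum_distrib_right[symmetric] sum_gibbs)
  also have "\<dots> \<le> (\<Sum>\<sigma>\<in>UNIV. gibbs J h \<sigma>
      * (\<bar>local_field J1 h1 v \<sigma> - local_field J2 h2 v \<sigma>\<bar> + (\<Sum>u\<in>UNIV. \<bar>J1 v u - J2 v u\<bar>)))"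
    by (intro sum_mono mult_left_mono abs_external_field_diff_le less_imp_le gibbs_pos)
  also have "\<dots> = (\<Sum>\<sigma>\<in>UNIV. gibbs J h \<sigma> * \<bar>local_field J1 h1 v \<sigma> - local_field J2 h2 v \<sigma>\<bar>)
     + (\<Sum>u\<in>UNIV. \<bar>J1 v u - J2 v u\<bar>)"
    by (simp add: distrib_left sum.distrib sum_distrib_right[symmetric] sum_gibbs)
  finally show ?thesis .
qed

context
  fixes J1 J2 :: "'v::finite \<Rightarrow> 'v \<Rightarrow> real" and h1 h2 :: "'v \<Rightarrow> real" and b :: real
  assumes sym1: "\<And>u w. J1 u w = J1 w u" and diag1: "\<And>v. J1 v v = 0"
    and sym2: "\<And>u w. J2 u w = J2 w u" and diag2: "\<And>v. J2 v v = 0"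
    and b_pos: "0 < b"
    and bounded1: "marginally_bounded b (gibbs J1 h1)"
    and bounded2: "marginally_bounded b (gibbs J2 h2)"
begin

lemma b_le_one: "b \<le> 1"
  using marginally_bounded_site_cond[OF bounded2, of v \<sigma>]
    marginally_bounded_site_cond_le[OF bounded2 gibbs_pos, of v \<sigma>] b_pos
  by linarith

lemma field_diff_le_site_cond_diff:
  "b * \<bar>local_field J1 h1 v \<sigma> - local_field J2 h2 v \<sigma>\<bar>
     \<le> \<bar>site_cond (gibbs J1 h1) v \<sigma> - site_cond (gibbs J2 h2) v \<sigma>\<bar>"
proof -
  let ?p = "site_cond (gibbs J1 h1) v \<sigma>" and ?q = "site_cond (gibbs J2 h2) v \<sigma>"
  have "2 * \<bar>local_field J1 h1 v \<sigma> - local_field J2 h2 v \<sigma>\<bar> = \<bar>logit ?p - logit ?q\<bar>"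
    by (simp add: logit_site_cond_gibbs[OF sym1 diag1] logit_site_cond_gibbs[OF sym2 diag2]
        abs_mult right_diff_distrib[symmetric])
  also have "\<dots> \<le> 2 * \<bar>?p - ?q\<bar> / b"
    using b_pos marginally_bounded_site_cond[OF bounded1] marginally_bounded_site_cond[OF bounded2]
      marginally_bounded_site_cond_le[OF bounded1 gibbs_pos]
      marginally_bounded_site_cond_le[OF bounded2 gibbs_pos]
    by (intro abs_logit_diff_le) (auto simp: algebra_simps)
  finally show ?thesis
    using b_pos by (simp add: field_simps)
qed

lemma field_diff_expectation_le:
  "b * (\<Sum>\<sigma>\<in>UNIV. gibbs J2 h2 \<sigma> * \<bar>local_field J1 h1 v \<sigma> - local_field J2 h2 v \<sigma>\<bar>)
     \<le> (\<Sum>\<sigma>\<in>UNIV. \<bar>gibbs J1 h1 \<sigma> - gibbs J2 h2 \<sigma>\<bar>)"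
proof -
  have "b * (\<Sum>\<sigma>\<in>UNIV. gibbs J2 h2 \<sigma> * \<bar>local_field J1 h1 v \<sigma> - local_field J2 h2 v \<sigma>\<bar>)
      = (\<Sum>\<sigma>\<in>UNIV. gibbs J2 h2 \<sigma> * (b * \<bar>local_field J1 h1 v \<sigma> - local_field J2 h2 v \<sigma>\<bar>))"
    by (simp add: sum_distrib_left ac_simps)
  also have "\<dots> \<le> (\<Sum>\<sigma>\<in>UNIV. gibbs J2 h2 \<sigma> * \<bar>site_cond (gibbs J1 h1) v \<sigma> - site_cond (gibbs J2 h2) v \<sigma>\<bar>)"
    by (intro sum_mono mult_left_mono field_diff_le_site_cond_diff less_imp_le gibbs_pos)
  also have "\<dots> \<le> (\<Sum>\<sigma>\<in>UNIV. \<bar>gibbs J1 h1 \<sigma> - gibbs J2 h2 \<sigma>\<bar>)"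
    by (intro sum_site_cond_diff_le gibbs_pos)
  finally show ?thesis .
qed

lemma coupling_diff_le_field_diff_expectation:
  "2 * b * \<bar>J1 v w - J2 v w\<bar>
     \<le> (\<Sum>\<sigma>\<in>UNIV. gibbs J2 h2 \<sigma> * \<bar>local_field J1 h1 v \<sigma> - local_field J2 h2 v \<sigma>\<bar>)"
proof -
  have "(local_field J1 h1 v \<sigma> - local_field J2 h2 v \<sigma>)
      - (local_field J1 h1 v (flip w \<sigma>) - local_field J2 h2 v (flip w \<sigma>))
      = (J1 v w - J2 v w) * (2 * spin \<sigma> w)" for \<sigma>
    by (simp add: local_field_flip algebra_simps)
  then have "2 * \<bar>J1 v w - J2 v w\<bar>
      \<le> \<bar>(local_field J1 h1 v \<sigma> - local_field J2 h2 v \<sigma>)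
         - (local_field J1 h1 v (flip w \<sigma>) - local_field J2 h2 v (flip w \<sigma>))\<bar>" for \<sigma>
    by (simp only: abs_mult) simp
  then have "b * (2 * \<bar>J1 v w - J2 v w\<bar>)
      \<le> (\<Sum>\<sigma>\<in>UNIV. gibbs J2 h2 \<sigma> * \<bar>local_field J1 h1 v \<sigma> - local_field J2 h2 v \<sigma>\<bar>)"
    using b_pos marginally_bounded_site_cond[OF bounded2]
    by (intro expectation_abs_ge_flip_jump[OF gibbs_pos sum_gibbs]) auto
  then show ?thesis
    by (simp add: mult.assoc)
qed

abbreviation (input) l1_dist :: real where
  "l1_dist \<equiv> \<Sum>\<sigma>\<in>UNIV. \<bar>gibbs J1 h1 \<sigma> - gibbs J2 h2 \<sigma>\<bar>"

lemma coupling_diff_bound: "b\<^sup>2 * \<bar>J1 v w - J2 v w\<bar> \<le> l1_dist"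
proof -
  have "b\<^sup>2 * \<bar>J1 v w - J2 v w\<bar> \<le> b * (2 * b * \<bar>J1 v w - J2 v w\<bar>)"
    using b_pos by (simp add: power2_eq_square)
  also have "\<dots> \<le> b * (\<Sum>\<sigma>\<in>UNIV. gibbs J2 h2 \<sigma> * \<bar>local_field J1 h1 v \<sigma> - local_field J2 h2 v \<sigma>\<bar>)"
    using b_pos by (intro mult_left_mono coupling_diff_le_field_diff_expectation) auto
  also have "\<dots> \<le> l1_dist"
    by (rule field_diff_expectation_le)
  finally show ?thesis .
qed

lemma coupling_row_sum_le:
  assumes support: "\<And>u w. J1 u w \<noteq> J2 u w \<Longrightarrow> E u w"
  shows "2 * b * (\<Sum>u\<in>UNIV. \<bar>J1 v u - J2 v u\<bar>)
    \<le> real (deg E v) * (\<Sum>\<sigma>\<in>UNIV. gibbs J2 h2 \<sigma> * \<bar>local_field J1 h1 v \<sigma> - local_field J2 h2 v \<sigma>\<bar>)"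
proof -
  have "(\<Sum>u\<in>UNIV. \<bar>J1 v u - J2 v u\<bar>) = (\<Sum>u\<in>{u. E u v}. \<bar>J1 v u - J2 v u\<bar>)"
    using support sym1 sym2 by (intro sum.mono_neutral_right) force+
  then have "2 * b * (\<Sum>u\<in>UNIV. \<bar>J1 v u - J2 v u\<bar>) = (\<Sum>u\<in>{u. E u v}. 2 * b * \<bar>J1 v u - J2 v u\<bar>)"
    by (simp add: sum_distrib_left)
  also have "\<dots> \<le> (\<Sum>u\<in>{u. E u v}.
      \<Sum>\<sigma>\<in>UNIV. gibbs J2 h2 \<sigma> * \<bar>local_field J1 h1 v \<sigma> - local_field J2 h2 v \<sigma>\<bar>)"
    by (intro sum_mono coupling_diff_le_field_diff_expectation)
  finally show ?thesis
    by (simp add: deg_def)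
qed

lemma external_field_diff_bound:
  assumes support: "\<And>u w. J1 u w \<noteq> J2 u w \<Longrightarrow> E u w"
  shows "b\<^sup>2 * \<bar>h1 v - h2 v\<bar> \<le> (real (deg E v) + 1) * l1_dist"
proof -
  define F where "F = (\<Sum>\<sigma>\<in>UNIV. gibbs J2 h2 \<sigma> * \<bar>local_field J1 h1 v \<sigma> - local_field J2 h2 v \<sigma>\<bar>)"
  define S where "S = (\<Sum>u\<in>UNIV. \<bar>J1 v u - J2 v u\<bar>)"
  have "0 \<le> F"
    unfolding F_def by (intro sum_nonneg mult_nonneg_nonneg) (simp_all add: less_imp_le gibbs_pos)
  then have "b * F \<le> F"
    using b_le_one mult_right_mono[of b 1 F] by simp
  moreover have "2 * b * S \<le> real (deg E v) * F" "0 \<le> b * S"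
    using coupling_row_sum_le[where E = E and v = v, OF support] b_pos by (simp_all add: F_def S_def sum_nonneg)
  moreover have "b * \<bar>h1 v - h2 v\<bar> \<le> b * F + b * S"
    using mult_left_mono[OF abs_external_field_diff_le_expectation, of b] b_pos
    by (simp add: F_def S_def distrib_left)
  ultimately have "b * \<bar>h1 v - h2 v\<bar> \<le> (real (deg E v) + 1) * F"
    by (simp add: distrib_right)
  then have "b * (b * \<bar>h1 v - h2 v\<bar>) \<le> (real (deg E v) + 1) * (b * F)"
    using b_pos by (simp add: mult_left_mono mult.left_commute)
  also have "\<dots> \<le> (real (deg E v) + 1) * l1_dist"
    unfolding F_def by (intro mult_left_mono field_diff_expectation_le) simp
  finally show ?thesis
    by (simp add: power2_eq_square mult.assoc)
qed

lemma d_par_bound: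
  assumes support: "\<And>u w. J1 u w \<noteq> J2 u w \<Longrightarrow> E u w"
  shows "b\<^sup>2 * d_par E J1 h1 J2 h2 \<le> l1_dist"
proof -
  have "d_par E J1 h1 J2 h2 \<le> l1_dist / b\<^sup>2"
    unfolding d_par_def
  proof (intro max.boundedI Max.boundedI; clarsimp)
    show "\<bar>J1 u w - J2 u w\<bar> \<le> l1_dist / b\<^sup>2" for u w
      using coupling_diff_bound[of u w] b_pos by (simp add: pos_le_divide_eq mult.commute)
    show "\<bar>h1 v - h2 v\<bar> / (real (deg E v) + 1) \<le> l1_dist / b\<^sup>2" for v
      using external_field_diff_bound[where E = E and v = v, OF support] b_pos
      by (simp add: divide_simps mult.commute)
  qed
  then show ?thesis
    using b_pos by (simp add: pos_le_divide_eq mult.commute)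
qed

end

lemma d_par_nonneg: "0 \<le> d_par E J1 h1 J2 h2"
proof -
  have "\<bar>J1 u u - J2 u u\<bar> \<le> Max ((\<lambda>(u, v). \<bar>J1 u v - J2 u v\<bar>) ` UNIV)" for u
    by (rule Max_ge) auto
  then show ?thesis
    unfolding d_par_def by (meson abs_ge_zero max.coboundedI1 order_trans)
qed

lemma ising_model_sym: "ising_model E J h \<Longrightarrow> J u w = J w u"
  by (simp add: ising_model_def)

lemma ising_model_diag: "simple_graph E \<Longrightarrow> ising_model E J h \<Longrightarrow> J v v = 0"
  by (metis ising_model_def simple_graph_def)

lemma ising_model_diff_support:
  "ising_model E J1 h1 \<Longrightarrow> ising_model E J2 h2 \<Longrightarrow> J1 u w \<noteq> J2 u w \<Longrightarrow> E u w"
  by (metis ising_model_def)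

theorem lemma2p2:
  fixes E :: "'v::finite \<Rightarrow> 'v \<Rightarrow> bool"
    and J\<nu> J\<mu> :: "'v \<Rightarrow> 'v \<Rightarrow> real" and h\<nu> h\<mu> :: "'v \<Rightarrow> real"
    and \<alpha> b :: real
  assumes "\<alpha> \<ge> 1" and "0 < b" and "b \<le> 1"
    and "simple_graph E"
    and "ising_model E J\<nu> h\<nu>" and "ising_model E J\<mu> h\<mu>"
    and "marginally_bounded b (gibbs J\<nu> h\<nu>)"
    and "marginally_bounded b (gibbs J\<mu> h\<mu>)"
  shows "chi_alpha_div \<alpha> (gibbs J\<nu> h\<nu>) (gibbs J\<mu> h\<mu>)
           \<ge> b powr (2 * \<alpha>) / 2 * d_par E J\<nu> h\<nu> J\<mu> h\<mu> powr \<alpha>"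
proof -
  let ?d = "d_par E J\<nu> h\<nu> J\<mu> h\<mu>"
  let ?l1 = "\<Sum>\<sigma>\<in>UNIV. \<bar>gibbs J\<nu> h\<nu> \<sigma> - gibbs J\<mu> h\<mu> \<sigma>\<bar>"
  have d_par_le_l1: "b\<^sup>2 * ?d \<le> ?l1"
    using assms by (intro d_par_bound)
      (auto intro: ising_model_sym ising_model_diag ising_model_diff_support)
  have "b powr (2 * \<alpha>) / 2 * ?d powr \<alpha> = (b\<^sup>2 * ?d) powr \<alpha> / 2"
    using \<open>0 < b\<close> d_par_nonneg
    by (simp add: powr_mult powr_powr flip: powr_numeral)
  also have "\<dots> \<le> ?l1 powr \<alpha> / 2"
    using d_par_le_l1 \<open>\<alpha> \<ge> 1\<close>
    by (intro divide_right_mono powr_mono2) (simp_all add: d_par_nonneg)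
  also have "\<dots> \<le> chi_alpha_div \<alpha> (gibbs J\<nu> h\<nu>) (gibbs J\<mu> h\<mu>)"
    using \<open>\<alpha> \<ge> 1\<close> by (intro chi_alpha_div_ge_l1 gibbs_pos sum_gibbs)
  finally show ?thesis .
qed

end
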